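(* Let $(X,\ast,u,d)$ be a finite GL-rack whose diagonal map $\Delta$ is a single cycle of length $|X|$. Then $(X,\ast,u,d)$ is a permutation GL-rack; specifically, $x\ast y=\Delta(x)$ for all $x,y\in X$ and $u\circ d=\Delta^{-1}$.
   Context: A rack is a set $X$ with a binary operation $\ast$ such that for every $y\in X$ the map $x\mapsto x\ast y$ is a bijection of $X$ and $(x\ast y)\ast z=(x\ast z)\ast(y\ast z)$ for all $x,y,z$. A GL-rack is a quadruple $(X,\ast,u,d)$ where $(X,\ast)$ is a rack and $u,d\colon X\to X$ are maps such that for all $x,y\in X$: $u(d(x\ast x))=d(u(x\ast x))=x$; $u(x\ast y)=u(x)\ast y$ and $d(x\ast y)=d(x)\ast y$; $x\ast u(y)=x\ast d(y)=x\ast y$. The diagonal map is $\Delta(x)=x\ast x$; for a finite GL-rack it is a bijection and $\Delta=(u\circ d)^{-1}$. A permutation GL-rack is a GL-rack $(X,\ast,u,d)$ with $X$ finite and $x\ast y=\sigma(x)$ for all $x,y$, for some permutation $\sigma$ of $X$, with $u\circ d=\sigma^{-1}$. *)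

theory Defs
  imports Main
begin

definition rack :: "'a set \<Rightarrow> ('a \<Rightarrow> 'a \<Rightarrow> 'a) \<Rightarrow> bool" where
  "rack X op \<longleftrightarrow>
     (\<forall>x\<in>X. \<forall>y\<in>X. op x y \<in> X) \<and>
     (\<forall>y\<in>X. bij_betw (\<lambda>x. op x y) X X) \<and>
     (\<forall>x\<in>X. \<forall>y\<in>X. \<forall>z\<in>X. op (op x y) z = op (op x z) (op y z))"

definition GL_rack :: "'a set \<Rightarrow> ('a \<Rightarrow> 'a \<Rightarrow> 'a) \<Rightarrow> ('a \<Rightarrow> 'a) \<Rightarrow> ('a \<Rightarrow> 'a) \<Rightarrow> bool" where
  "GL_rack X op u d \<longleftrightarrow>
     rack X op \<and>
     (\<forall>x\<in>X. u x \<in> X \<and> d x \<in> X) \<and>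
     (\<forall>x\<in>X. u (d (op x x)) = x \<and> d (u (op x x)) = x) \<and>
     (\<forall>x\<in>X. \<forall>y\<in>X. u (op x y) = op (u x) y \<and> d (op x y) = op (d x) y) \<and>
     (\<forall>x\<in>X. \<forall>y\<in>X. op x (u y) = op x y \<and> op x (d y) = op x y)"

definition diag :: "('a \<Rightarrow> 'a \<Rightarrow> 'a) \<Rightarrow> 'a \<Rightarrow> 'a" where
  "diag op x = op x x"

definition permutation_GL_rack :: "'a set \<Rightarrow> ('a \<Rightarrow> 'a \<Rightarrow> 'a) \<Rightarrow> ('a \<Rightarrow> 'a) \<Rightarrow> ('a \<Rightarrow> 'a) \<Rightarrow> bool" where
  "permutation_GL_rack X op u d \<longleftrightarrow>
     GL_rack X op u d \<and> finite X \<and>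
     (\<exists>\<sigma>. bij_betw \<sigma> X X \<and> (\<forall>x\<in>X. \<forall>y\<in>X. op x y = \<sigma> x) \<and>
          (\<forall>x\<in>X. u (d x) = inv_into X \<sigma> x))"

definition full_cycle_on :: "'a set \<Rightarrow> ('a \<Rightarrow> 'a) \<Rightarrow> bool" where
  "full_cycle_on X f \<longleftrightarrow> bij_betw f X X \<and>
     (\<exists>x\<in>X. X = {(f ^^ k) x | k. k < card X})"

end

theory Submission
  imports Defs
begin

text \<open>Self-distributivity gives (a * y) * y = (a * y) * (y * y), and right
  multiplication by y is onto X, so right multiplication by y and by \<open>\<Delta>(y)\<close>
  coincide. Hence right multiplications are constant along \<open>\<Delta>\<close>-orbits, and when
  \<open>\<Delta>\<close> is a full cycle, x * y = x * x = \<open>\<Delta>(x)\<close> for all x, y. The identity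
  u \<circ> d = \<open>\<Delta>\<^sup>-\<^sup>1\<close> holds in every finite GL-rack.\<close>

lemma rack_op_diag_right:
  assumes "rack X op" and "x \<in> X" and "z \<in> X"
  shows "op z (diag op x) = op z x"
proof -
  have "(\<lambda>a. op a x) ` X = X"
    using assms(1,2) unfolding rack_def bij_betw_def by blast
  with assms(3) obtain a where "a \<in> X" and z: "z = op a x" by blast
  then have "op (op a x) x = op (op a x) (op x x)"
    using assms(1,2) unfolding rack_def by blast
  then show ?thesis using z by (simp add: diag_def)
qed

lemma rack_op_funpow_diag_right:
  assumes "rack X op" and "x \<in> X"
  shows "(diag op ^^ k) x \<in> X \<and> (\<forall>z\<in>X. op z ((diag op ^^ k) x) = op z x)"
proof (induction k)
  case 0
  show ?case using assms(2) by simp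
next
  case (Suc k)
  then have "(diag op ^^ k) x \<in> X" by blast
  then have "(diag op ^^ Suc k) x \<in> X"
    using assms(1) unfolding rack_def diag_def by simp
  with Suc show ?case using rack_op_diag_right[OF assms(1)] by simp
qed

lemma rack_op_eq_diag_if_single_orbit:
  assumes "rack X op" and "x0 \<in> X"
    and orbit: "\<And>y. y \<in> X \<Longrightarrow> \<exists>k. y = (diag op ^^ k) x0"
    and "x \<in> X" and "y \<in> X"
  shows "op x y = diag op x"
proof -
  have right_op_x0: "op x w = op x x0" if "w \<in> X" for w
    using orbit[OF that] rack_op_funpow_diag_right[OF assms(1,2)] assms(4) by auto
  show ?thesis
    using right_op_x0[OF assms(5)] right_op_x0[OF assms(4)] by (simp add: diag_def)
qed

lemma GL_rack_diag_bij:
  assumes "finite X" and "GL_rack X op u d"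
  shows "bij_betw (diag op) X X"
proof -
  have ud_diag: "u (d (diag op x)) = x" if "x \<in> X" for x
    using assms(2) that unfolding GL_rack_def diag_def by blast
  then have "inj_on (diag op) X"
    by (metis inj_onI)
  moreover have "diag op ` X \<subseteq> X"
    using assms(2) unfolding GL_rack_def rack_def diag_def by blast
  ultimately show ?thesis
    using endo_inj_surj[OF assms(1)] by (simp add: bij_betw_def)
qed

lemma GL_rack_ud_eq_inv_diag:
  assumes "finite X" and "GL_rack X op u d" and "x \<in> X"
  shows "u (d x) = inv_into X (diag op) x"
proof -
  define w where "w = inv_into X (diag op) x"
  have "x \<in> diag op ` X"
    using GL_rack_diag_bij[OF assms(1,2)] assms(3) by (simp add: bij_betw_def)
  then have "w \<in> X" and "diag op w = x"
    unfolding w_def by (auto intro: inv_into_into f_inv_into_f)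
  moreover have "u (d (diag op w)) = w"
    using assms(2) \<open>w \<in> X\<close> unfolding GL_rack_def diag_def by blast
  ultimately show ?thesis
    unfolding w_def by simp
qed

theorem corollary3p4:
  fixes X :: "'a set" and op :: "'a \<Rightarrow> 'a \<Rightarrow> 'a" and u d :: "'a \<Rightarrow> 'a"
  assumes "finite X"
    and "GL_rack X op u d"
    and "full_cycle_on X (diag op)"
  shows "permutation_GL_rack X op u d
         \<and> (\<forall>x\<in>X. \<forall>y\<in>X. op x y = diag op x)
         \<and> (\<forall>x\<in>X. u (d x) = inv_into X (diag op) x)"
proof -
  have rack: "rack X op"
    using assms(2) unfolding GL_rack_def by blast
  from assms(3) obtain x0 where "x0 \<in> X" and cycle: "X = {(diag op ^^ k) x0 | k. k < card X}"
    unfolding full_cycle_on_def by blast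
  have orbit: "\<exists>k. y = (diag op ^^ k) x0" if "y \<in> X" for y
    using that by (subst (asm) cycle) blast
  have op_diag: "\<forall>x\<in>X. \<forall>y\<in>X. op x y = diag op x"
    using rack_op_eq_diag_if_single_orbit[OF rack \<open>x0 \<in> X\<close> orbit] by blast
  have ud: "\<forall>x\<in>X. u (d x) = inv_into X (diag op) x"
    using GL_rack_ud_eq_inv_diag[OF assms(1,2)] by blast
  have "permutation_GL_rack X op u d"
    unfolding permutation_GL_rack_def
    using assms(1,2) GL_rack_diag_bij[OF assms(1,2)] op_diag ud by blast
  with op_diag ud show ?thesis by blast
qed

end
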